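(* Let $P_x$ be a category of partitions. Then: (1) if $p\in P_x(k,l)$ then $\bar p\in P_x(0,k+l)$; (2) if $p\in P_x$ has a block with $s$ elements, then $1_s\in P_x(0,s)$ or $\uparrow\otimes 1_s\in P_x(0,s+1)$; (3) if $p\in P(k,l)$ is such that for every block $b$ of $p$ one has $1_{|b|}\in P_x(0,|b|)$, then $p\in P_x(k,l)$.
   Context: For integers $k,l\ge0$, $P(k,l)$ is the set of partitions (decompositions into disjoint nonempty blocks) of a set consisting of $k$ upper points labelled $1,\dots,k$ and $l$ lower points labelled $1,\dots,l$, pictured with the upper points on a top row and the lower points on a bottom row. Tensor product: for $p\in P(k,l)$, $q\in P(k',l')$, $p\otimes q\in P(k+k',l+l')$ is obtained by placing $q$ to the right of $p$. Composition: for $p\in P(m,l)$ and $q\in P(k,m)$, $pq\in P(k,l)$ is obtained by placing $q$ above $p$, identifying the $m$ lower points of $q$ with the $m$ upper points of $p$, merging blocks connected through these middle points, and then deleting the middle points together with all blocks consisting only of middle points. Involution: $p^*\in P(l,k)$ is the upside-down reflection of $p\in P(k,l)$. Special partitions: $|\in P(1,1)$ (one block containing the upper and the lower point); the basic crossing in $P(2,2)$, with blocks $\{\text{upper }1,\text{lower }2\}$ and $\{\text{upper }2,\text{lower }1\}$; $\sqcap\in P(0,2)$ (one block containing both lower points); $\uparrow\in P(0,1)$ (the singleton). A category of partitions is a family of subsets $P_x(k,l)\subset P(k,l)$ ($k,l\ge0$) stable under tensor product, composition (whenever defined) and involution, and containing $|$, the basic crossing and $\sqcap$. For $s\ge1$,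 $1_s\in P(0,s)$ denotes the one-block partition of $s$ lower points. For $p\in P(k,l)$, $\bar p\in P(0,k+l)$ is obtained by rotating the upper points counterclockwise down to the bottom row: its lower points $1,\dots,k$ are the former upper points $k,k-1,\dots,1$ and its lower points $k+1,\dots,k+l$ are the former lower points $1,\dots,l$, the block structure being unchanged. *)

theory Defs
  imports Main "HOL-Library.Disjoint_Sets"
begin

datatype pt = Up nat | Lo nat

definition pts :: "nat \<Rightarrow> nat \<Rightarrow> pt set" where
  "pts k l = Up ` {1..k} \<union> Lo ` {1..l}"

definition P :: "nat \<Rightarrow> nat \<Rightarrow> pt set set set" where
  "P k l = {B. partition_on (pts k l) B}"

definition shift_pt :: "nat \<Rightarrow> nat \<Rightarrow> pt \<Rightarrow> pt" where
  "shift_pt k l x = (case x of Up i \<Rightarrow> Up (i + k) | Lo j \<Rightarrow> Lo (j + l))"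

definition tensor :: "nat \<Rightarrow> nat \<Rightarrow> pt set set \<Rightarrow> pt set set \<Rightarrow> pt set set" where
  "tensor k l p q = p \<union> (\<lambda>b. shift_pt k l ` b) ` q"

definition swap_pt :: "pt \<Rightarrow> pt" where
  "swap_pt x = (case x of Up i \<Rightarrow> Lo i | Lo j \<Rightarrow> Up j)"

definition invol :: "pt set set \<Rightarrow> pt set set" where
  "invol p = (\<lambda>b. swap_pt ` b) ` p"

text \<open>Composition p q (q placed above p): points of the three rows.\<close>
datatype cpt = CU nat | CM nat | CL nat

definition liftq :: "pt \<Rightarrow> cpt" where
  "liftq x = (case x of Up i \<Rightarrow> CU i | Lo j \<Rightarrow> CM j)"

definition liftp :: "pt \<Rightarrow> cpt" where
  "liftp x = (case x of Up i \<Rightarrow> CM i | Lo j \<Rightarrow> CL j)"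

definition is_mid :: "cpt \<Rightarrow> bool" where
  "is_mid x = (case x of CM _ \<Rightarrow> True | _ \<Rightarrow> False)"

definition unlift :: "cpt \<Rightarrow> pt" where
  "unlift x = (case x of CU i \<Rightarrow> Up i | CM i \<Rightarrow> Up i | CL j \<Rightarrow> Lo j)"

definition comp_edges :: "pt set set \<Rightarrow> pt set set \<Rightarrow> (cpt \<times> cpt) set" where
  "comp_edges p q =
     {(x, y). \<exists>b\<in>q. x \<in> liftq ` b \<and> y \<in> liftq ` b} \<union>
     {(x, y). \<exists>b\<in>p. x \<in> liftp ` b \<and> y \<in> liftp ` b}"

definition comp :: "pt set set \<Rightarrow> pt set set \<Rightarrow> pt set set" where
  "comp p q =
     {unlift ` {y. (x, y) \<in> (comp_edges p q)\<^sup>* \<and> \<not> is_mid y} | x.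
        x \<in> (\<Union>b\<in>q. liftq ` b) \<union> (\<Union>b\<in>p. liftp ` b) \<and> \<not> is_mid x}"

definition idp :: "pt set set" where "idp = {{Up 1, Lo 1}}"
definition crossp :: "pt set set" where "crossp = {{Up 1, Lo 2}, {Up 2, Lo 1}}"
definition pairp :: "pt set set" where "pairp = {{Lo 1, Lo 2}}"
definition singp :: "pt set set" where "singp = {{Lo 1}}"
definition one_block :: "nat \<Rightarrow> pt set set" where "one_block s = {Lo ` {1..s}}"

definition rot_pt :: "nat \<Rightarrow> pt \<Rightarrow> pt" where
  "rot_pt k x = (case x of Up i \<Rightarrow> Lo (k + 1 - i) | Lo j \<Rightarrow> Lo (k + j))"

definition bar_part :: "nat \<Rightarrow> pt set set \<Rightarrow> pt set set" where
  "bar_part k p = (\<lambda>b. rot_pt k ` b) ` p"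

definition is_category :: "(nat \<Rightarrow> nat \<Rightarrow> pt set set set) \<Rightarrow> bool" where
  "is_category Px \<longleftrightarrow>
     (\<forall>k l. Px k l \<subseteq> P k l) \<and>
     (\<forall>k l k' l' p q. p \<in> Px k l \<longrightarrow> q \<in> Px k' l' \<longrightarrow> tensor k l p q \<in> Px (k + k') (l + l')) \<and>
     (\<forall>k m l p q. p \<in> Px m l \<longrightarrow> q \<in> Px k m \<longrightarrow> comp p q \<in> Px k l) \<and>
     (\<forall>k l p. p \<in> Px k l \<longrightarrow> invol p \<in> Px l k) \<and>
     idp \<in> Px 1 1 \<and> crossp \<in> Px 2 2 \<and> pairp \<in> Px 0 2"

end

theory Submission
  imports Defs "HOL-Combinatorics.Permutations"
begin

text \<open>
  Composing \<open>tensor 1 1 idp p\<close> with \<open>tensor 0 2 pairp (id_part n)\<close> placed on top bends the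
  first upper point of \<open>p\<close> down to the front of the lower row; iterating this rotation gives
  \<open>bar_part k p\<close>, which is (1). Composing with tensor products of identities and one crossing
  realises every permutation of the lower row, so together with rotations and the involution a
  category of partitions is closed under every relabelling of the points of \<open>P k l\<close> onto those
  of \<open>P k' l'\<close> with \<open>k + l = k' + l'\<close>.

  For (3), the one-block partitions of the blocks of \<open>p\<close> are placed side by side and the result
  is relabelled into \<open>p\<close>. For (2), \<open>p\<close> is relabelled so that the block \<open>b\<close> fills the lower
  row and the remaining points the upper row, except that one of them goes to the front of the
  lower row if their number is odd; capping the upper row with pair partitions then deletes all
  other blocks and leaves \<open>one_block s\<close>, respectively \<open>tensor 0 1 singp (one_block s)\<close>.
\<close>

section \<open>Partitions\<close>

definition map_blocks :: "(pt \<Rightarrow> pt) \<Rightarrow> pt set set \<Rightarrow> pt set set" where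
  "map_blocks f p = (\<lambda>b. f ` b) ` p"

lemma map_blocks_comp: "map_blocks f (map_blocks g p) = map_blocks (f \<circ> g) p"
  by (auto simp: map_blocks_def image_comp)

lemma map_blocks_cong: "(\<And>x. x \<in> \<Union>p \<Longrightarrow> f x = g x) \<Longrightarrow> map_blocks f p = map_blocks g p"
  unfolding map_blocks_def by (rule image_cong) (auto intro!: image_cong)

lemma map_blocks_ident: "(\<And>x. x \<in> \<Union>p \<Longrightarrow> f x = x) \<Longrightarrow> map_blocks f p = p"
  using map_blocks_cong[of p f id] by (simp add: map_blocks_def)

lemma invol_eq_map_blocks: "invol p = map_blocks swap_pt p"
  by (simp add: invol_def map_blocks_def)

lemma pt_fun_simps [simp]:
  "liftq (Up i) = CU i" "liftq (Lo j) = CM j" "liftp (Up i) = CM i" "liftp (Lo j) = CL j"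
  "unlift (CU i) = Up i" "unlift (CM i) = Up i" "unlift (CL j) = Lo j"
  "is_mid (CM i)" "\<not> is_mid (CU i)" "\<not> is_mid (CL i)"
  "shift_pt k l (Up i) = Up (i + k)" "shift_pt k l (Lo j) = Lo (j + l)"
  "swap_pt (Up i) = Lo i" "swap_pt (Lo j) = Up j"
  "rot_pt k (Up i) = Lo (k + 1 - i)" "rot_pt k (Lo j) = Lo (k + j)"
  by (simp_all add: liftq_def liftp_def unlift_def is_mid_def shift_pt_def swap_pt_def rot_pt_def)

lemma lift_eq_iff [simp]:
  "liftp x = CL j \<longleftrightarrow> x = Lo j" "liftp x = CM j \<longleftrightarrow> x = Up j" "liftp x \<noteq> CU j"
  "liftq x = CU j \<longleftrightarrow> x = Up j" "liftq x = CM j \<longleftrightarrow> x = Lo j" "liftq x \<noteq> CL j"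
  "CL j = liftp x \<longleftrightarrow> x = Lo j" "CM j = liftp x \<longleftrightarrow> x = Up j" "CU j \<noteq> liftp x"
  "CU j = liftq x \<longleftrightarrow> x = Up j" "CM j = liftq x \<longleftrightarrow> x = Lo j" "CL j \<noteq> liftq x"
  by (cases x; auto)+

lemma lift_image_iff [simp]:
  "CU i \<in> liftq ` c \<longleftrightarrow> Up i \<in> c" "CM j \<in> liftq ` c \<longleftrightarrow> Lo j \<in> c" "CL j \<notin> liftq ` c"
  "CM i \<in> liftp ` c \<longleftrightarrow> Up i \<in> c" "CL j \<in> liftp ` c \<longleftrightarrow> Lo j \<in> c" "CU j \<notin> liftp ` c"
  by (auto intro: rev_image_eqI)

lemma pt_image_iff [simp]:
  "Up i \<in> Up ` A \<longleftrightarrow> i \<in> A" "Lo j \<in> Lo ` A \<longleftrightarrow> j \<in> A" "Up i \<notin> Lo ` A" "Lo j \<notin> Up ` A"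
  by auto

lemma pt_set_eq: "c = Up ` {i. Up i \<in> c} \<union> Lo ` {j. Lo j \<in> c}"
  by (auto intro: pt.exhaust)

lemma liftq_image: "liftq ` c = CU ` {i. Up i \<in> c} \<union> CM ` {j. Lo j \<in> c}"
  by (subst (1) pt_set_eq) (simp add: image_Un image_image)

lemma inj_liftq: "inj liftq" and inj_liftp: "inj liftp"
  by (auto simp: inj_def liftq_def liftp_def split: pt.splits)

lemma pts_Up [simp]: "Up i \<in> pts k l \<longleftrightarrow> 1 \<le> i \<and> i \<le> k"
  and pts_Lo [simp]: "Lo j \<in> pts k l \<longleftrightarrow> 1 \<le> j \<and> j \<le> l"
  by (auto simp: pts_def)

lemma finite_pts [simp]: "finite (pts k l)"
  by (simp add: pts_def)

lemma pts_0_left: "pts 0 n = Lo ` {1..n}"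
  by (simp add: pts_def)

lemma card_pts: "card (pts k l) = k + l"
proof -
  have "card (Up ` {1..k} \<union> Lo ` {1..l}) = card (Up ` {1..k}) + card (Lo ` {1..l})"
    by (rule card_Un_disjoint) auto
  also have "\<dots> = k + l"
    by (simp add: card_image inj_on_def)
  finally show ?thesis
    by (simp add: pts_def)
qed

lemma P_Union: "p \<in> P k l \<Longrightarrow> \<Union>p = pts k l"
  and P_disjoint: "p \<in> P k l \<Longrightarrow> b \<in> p \<Longrightarrow> c \<in> p \<Longrightarrow> x \<in> b \<Longrightarrow> x \<in> c \<Longrightarrow> b = c"
  and P_block_nonempty: "p \<in> P k l \<Longrightarrow> b \<in> p \<Longrightarrow> b \<noteq> {}"
  unfolding P_def partition_on_def disjoint_def by auto

lemma P_block_subset: "p \<in> P k l \<Longrightarrow> b \<in> p \<Longrightarrow> b \<subseteq> pts k l"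
  using P_Union by blast

lemma P_cover: "p \<in> P k l \<Longrightarrow> x \<in> pts k l \<Longrightarrow> \<exists>c\<in>p. x \<in> c"
  using P_Union by blast

lemma finite_P: "p \<in> P k l \<Longrightarrow> finite p"
  unfolding P_def by (rule finite_elements[OF finite_pts]) simp

lemma finite_P_block: "p \<in> P k l \<Longrightarrow> b \<in> p \<Longrightarrow> finite b"
  by (rule finite_subset[OF P_block_subset finite_pts])

lemma map_blocks_in_P:
  assumes f: "bij_betw f (pts k l) (pts m n)" and p: "p \<in> P k l"
  shows "map_blocks f p \<in> P m n"
proof -
  have "partition_on (f ` pts k l) ((`) f ` p - {{}})"
    using partition_on_inj_image[of "pts k l" p f] p f by (simp add: P_def bij_betw_def)
  moreover have "(`) f ` p - {{}} = map_blocks f p"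
    using P_block_nonempty[OF p] by (auto simp: map_blocks_def)
  ultimately show ?thesis
    using bij_betw_imp_surj_on[OF f] by (simp add: P_def)
qed

lemma unlift_liftp [simp]: "unlift (liftp x) = x"
  by (cases x) simp_all

lemma bij_betw_extend:
  assumes g: "bij_betw g A B" and "finite A'" "finite B'" "card A' = card B'"
    and "A \<inter> A' = {}" "B \<inter> B' = {}"
  obtains f where "bij_betw f (A \<union> A') (B \<union> B')" "\<And>x. x \<in> A \<Longrightarrow> f x = g x" "f ` A' = B'"
proof -
  obtain h where h: "bij_betw h A' B'"
    using finite_same_card_bij assms(2-4) by blast
  define f where "f x = (if x \<in> A then g x else h x)" for x
  have "bij_betw f A B"
    using g by (rule bij_betw_cong[THEN iffD1, rotated]) (simp add: f_def)
  moreover have "bij_betw f A' B'"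
    using h by (rule bij_betw_cong[THEN iffD1, rotated]) (use assms(5) in \<open>auto simp: f_def\<close>)
  ultimately have "bij_betw f (A \<union> A') (B \<union> B')"
    using assms(6) by (rule bij_betw_combine)
  moreover have "f ` A' = B'"
    using bij_betw_imp_surj_on[OF \<open>bij_betw f A' B'\<close>] .
  ultimately show ?thesis
    using that by (simp add: f_def)
qed

lemma tensor_0_0_empty: "tensor 0 0 {} q = q"
proof -
  have "shift_pt 0 0 = id"
    by (auto simp: fun_eq_iff shift_pt_def split: pt.split)
  then show ?thesis
    by (simp add: tensor_def)
qed

section \<open>Computing compositions\<close>

definition comp_vertices :: "pt set set \<Rightarrow> pt set set \<Rightarrow> cpt set" where
  "comp_vertices p q = (\<Union>b\<in>q. liftq ` b) \<union> (\<Union>b\<in>p. liftp ` b)"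

lemma comp_edgesI:
  "b \<in> q \<Longrightarrow> x \<in> b \<Longrightarrow> y \<in> b \<Longrightarrow> (liftq x, liftq y) \<in> comp_edges p q"
  "b \<in> p \<Longrightarrow> x \<in> b \<Longrightarrow> y \<in> b \<Longrightarrow> (liftp x, liftp y) \<in> comp_edges p q"
  unfolding comp_edges_def by blast+

lemma comp_edgesE:
  assumes "(y, z) \<in> comp_edges p q"
  obtains b x x' where "b \<in> q" "x \<in> b" "x' \<in> b" "y = liftq x" "z = liftq x'"
    | b x x' where "b \<in> p" "x \<in> b" "x' \<in> b" "y = liftp x" "z = liftp x'"
  using assms unfolding comp_edges_def by blast

lemma sym_comp_edges: "sym (comp_edges p q)"
  unfolding comp_edges_def sym_def by blast

text \<open>The blocks of a composite are the non-middle parts of the connected components of the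
  graph \<open>comp_edges p q\<close>; it suffices to exhibit a family of edge-closed sets, each
  connected on its non-middle points, that covers the non-middle vertices.\<close>
lemma comp_eq_components:
  assumes closed: "\<And>c y z. c \<in> I \<Longrightarrow> y \<in> S c \<Longrightarrow> (y, z) \<in> comp_edges p q \<Longrightarrow> z \<in> S c"
    and connected: "\<And>c y z. c \<in> I \<Longrightarrow> y \<in> S c \<Longrightarrow> z \<in> S c \<Longrightarrow> \<not> is_mid y \<Longrightarrow> \<not> is_mid z
         \<Longrightarrow> (y, z) \<in> (comp_edges p q)\<^sup>*"
    and cover: "\<And>x. x \<in> comp_vertices p q \<Longrightarrow> \<not> is_mid x \<Longrightarrow> \<exists>c\<in>I. x \<in> S c"
    and nonempty: "\<And>c. c \<in> I \<Longrightarrow> \<exists>x \<in> comp_vertices p q \<inter> S c. \<not> is_mid x"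
  shows "comp p q = (\<lambda>c. unlift ` {y \<in> S c. \<not> is_mid y}) ` I"
proof -
  have closed_rtrancl: "z \<in> S c" if "c \<in> I" "y \<in> S c" "(y, z) \<in> (comp_edges p q)\<^sup>*" for c y z
    using that(3)
  proof (induction rule: rtrancl_induct)
    case base
    show ?case using that(2) .
  next
    case (step z z')
    then show ?case using closed[OF that(1)] by blast
  qed
  have component: "{z. (y, z) \<in> (comp_edges p q)\<^sup>* \<and> \<not> is_mid z} = {z \<in> S c. \<not> is_mid z}"
    if "c \<in> I" "y \<in> S c" "\<not> is_mid y" for c y
  proof
    show "{z. (y, z) \<in> (comp_edges p q)\<^sup>* \<and> \<not> is_mid z} \<subseteq> {z \<in> S c. \<not> is_mid z}"
      using closed_rtrancl[OF that(1,2)] by blast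
    show "{z \<in> S c. \<not> is_mid z} \<subseteq> {z. (y, z) \<in> (comp_edges p q)\<^sup>* \<and> \<not> is_mid z}"
      using connected[OF that(1,2) _ that(3)] by blast
  qed
  have "comp p q = (\<lambda>y. unlift ` {z. (y, z) \<in> (comp_edges p q)\<^sup>* \<and> \<not> is_mid z}) `
      {y \<in> comp_vertices p q. \<not> is_mid y}"
    unfolding comp_def comp_vertices_def by blast
  also have "\<dots> = (\<lambda>c. unlift ` {y \<in> S c. \<not> is_mid y}) ` I"
  proof (intro equalityI subsetI)
    fix B assume "B \<in> (\<lambda>y. unlift ` {z. (y, z) \<in> (comp_edges p q)\<^sup>* \<and> \<not> is_mid z}) `
      {y \<in> comp_vertices p q. \<not> is_mid y}"
    then obtain y where y: "y \<in> comp_vertices p q" "\<not> is_mid y"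
      and B: "B = unlift ` {z. (y, z) \<in> (comp_edges p q)\<^sup>* \<and> \<not> is_mid z}"
      by blast
    obtain c where "c \<in> I" "y \<in> S c"
      using cover y by blast
    with B y(2) show "B \<in> (\<lambda>c. unlift ` {y \<in> S c. \<not> is_mid y}) ` I"
      using component by blast
  next
    fix B assume "B \<in> (\<lambda>c. unlift ` {y \<in> S c. \<not> is_mid y}) ` I"
    then obtain c where c: "c \<in> I" and B: "B = unlift ` {y \<in> S c. \<not> is_mid y}"
      by blast
    obtain y where "y \<in> comp_vertices p q" "y \<in> S c" "\<not> is_mid y"
      using nonempty[OF c] by blast
    with B c show "B \<in> (\<lambda>y. unlift ` {z. (y, z) \<in> (comp_edges p q)\<^sup>* \<and> \<not> is_mid z}) `
      {y \<in> comp_vertices p q. \<not> is_mid y}"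
      using component[of c y] by blast
  qed
  finally show ?thesis .
qed

lemma rtrancl_through_clique:
  assumes "sym E" and clique: "\<And>h h'. h \<in> H \<Longrightarrow> h' \<in> H \<Longrightarrow> (h, h') \<in> E"
    and reach: "\<And>y. y \<in> S \<Longrightarrow> \<exists>h\<in>H. (y, h) \<in> E\<^sup>*" and "y \<in> S" "z \<in> S"
  shows "(y, z) \<in> E\<^sup>*"
proof -
  obtain h h' where "h \<in> H" "(y, h) \<in> E\<^sup>*" "h' \<in> H" "(z, h') \<in> E\<^sup>*"
    using reach \<open>y \<in> S\<close> \<open>z \<in> S\<close> by blast
  moreover have "(h', z) \<in> E\<^sup>*"
    using symD[OF sym_rtrancl[OF \<open>sym E\<close>] \<open>(z, h') \<in> E\<^sup>*\<close>] .
  ultimately show ?thesis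
    using clique[of h h'] by (meson r_into_rtrancl rtrancl_trans)
qed

text \<open>Components for composing \<open>r \<in> P m n\<close> with \<open>q \<in> P 0 m\<close> on top when at most one block of
  \<open>r\<close> meets both rows: that block may absorb all middle points, since neither \<open>q\<close> nor another
  block of \<open>r\<close> leads from the middle row to the lower row.\<close>
definition lower_component :: "pt set \<Rightarrow> cpt set" where
  "lower_component c = liftp ` c \<union> (if c \<inter> range Up = {} then {} else range CM)"

context
  fixes r q :: "pt set set" and m n :: nat
  assumes r: "r \<in> P m n" and q: "q \<in> P 0 m"
    and at_most_one_through_block: "\<And>c c'. c \<in> r \<Longrightarrow> c' \<in> r \<Longrightarrow>
      c \<inter> range Up \<noteq> {} \<Longrightarrow> c \<inter> range Lo \<noteq> {} \<Longrightarrow>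
      c' \<inter> range Up \<noteq> {} \<Longrightarrow> c' \<inter> range Lo \<noteq> {} \<Longrightarrow> c = c'"
begin

lemma lower_component_closed:
  assumes c: "c \<in> r" "c \<inter> range Lo \<noteq> {}" and y: "y \<in> lower_component c"
    and e: "(y, z) \<in> comp_edges r q"
  shows "z \<in> lower_component c"
proof -
  have through: "c \<inter> range Up \<noteq> {}" if "y \<in> range CM"
    using y that by (auto simp: lower_component_def split: if_splits)
  from e show ?thesis
  proof (cases rule: comp_edgesE)
    case (1 b x x')
    then have "y \<in> range CM" "z \<in> range CM"
      using P_block_subset[OF q 1(1)] by (force simp: pts_0_left)+
    then show ?thesis
      using through by (simp add: lower_component_def)
  next
    case (2 b x x')
    show ?thesis
    proof (cases "x \<in> c")
      case True
      then have "b = c"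
        using P_disjoint[OF r] 2 c by auto
      then show ?thesis
        using 2 by (simp add: lower_component_def)
    next
      case False
      then have "y \<in> range CM"
        using y 2 inj_liftp by (auto simp: lower_component_def inj_eq split: if_splits)
      then obtain i where "x = Up i"
        using 2 by auto
      then have "b \<inter> range Up \<noteq> {}" "b \<noteq> c"
        using 2 False by auto
      then have "b \<inter> range Lo = {}"
        using at_most_one_through_block[of b c] 2 c through[OF \<open>y \<in> range CM\<close>] by auto
      then have "z \<in> range CM"
        using 2 by (cases x') auto
      then show ?thesis
        using through[OF \<open>y \<in> range CM\<close>] by (simp add: lower_component_def)
    qed
  qed
qed

lemma comp_lower_restriction: "comp r q = (\<lambda>c. c \<inter> range Lo) ` {c \<in> r. c \<inter> range Lo \<noteq> {}}"
proof -
  define I where "I = {c \<in> r. c \<inter> range Lo \<noteq> {}}"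
  have nonmid: "{y \<in> lower_component c. \<not> is_mid y} = liftp ` (c \<inter> range Lo)" for c
    by (auto simp: lower_component_def is_mid_def liftp_def split: pt.splits if_splits)
  have connected: "(y, z) \<in> (comp_edges r q)\<^sup>*" if "c \<in> I" "y \<in> lower_component c"
    "z \<in> lower_component c" "\<not> is_mid y" "\<not> is_mid z" for c y z
  proof -
    have "y \<in> liftp ` c" "z \<in> liftp ` c"
      using that nonmid[of c] by blast+
    then show ?thesis
      using comp_edgesI(2)[of c r] that(1) by (auto simp: I_def)
  qed
  have cover: "\<exists>c\<in>I. x \<in> lower_component c" if x: "x \<in> comp_vertices r q" "\<not> is_mid x" for x
  proof -
    obtain b j where "b \<in> r" "Lo j \<in> b" "x = CL j"
      using x P_block_subset[OF q] unfolding comp_vertices_def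
      by (fastforce simp: is_mid_def liftq_def liftp_def pts_0_left split: pt.splits)
    then show ?thesis
      by (auto simp: I_def lower_component_def)
  qed
  have nonempty: "\<exists>x \<in> comp_vertices r q \<inter> lower_component c. \<not> is_mid x" if "c \<in> I" for c
  proof -
    obtain j where "Lo j \<in> c" "c \<in> r"
      using \<open>c \<in> I\<close> by (auto simp: I_def)
    then show ?thesis
      by (intro bexI[of _ "CL j"]) (force simp: comp_vertices_def lower_component_def)+
  qed
  have "comp r q = (\<lambda>c. unlift ` {y \<in> lower_component c. \<not> is_mid y}) ` I"
    by (rule comp_eq_components[OF lower_component_closed connected cover nonempty]) (auto simp: I_def)
  then show ?thesis
    by (simp add: nonmid image_image I_def)
qed

end

lemma image_Int_range_Lo:
  assumes "c \<subseteq> S" and "f ` A \<subseteq> range Lo" and "f ` (S - A) \<subseteq> range Up"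
  shows "f ` c \<inter> range Lo = f ` (c \<inter> A)"
proof -
  have "f ` c = f ` (c \<inter> A) \<union> f ` (c - A)"
    by (simp flip: image_Un add: Int_Diff_Un)
  moreover have "f ` (c \<inter> A) \<subseteq> range Lo"
    using assms(2) image_mono[of "c \<inter> A" A f] by simp
  moreover have "f ` (c - A) \<subseteq> range Up"
    using assms(1,3) image_mono[of "c - A" "S - A" f] by (meson Diff_mono order_refl order_trans)
  moreover have "range Up \<inter> range Lo = {}"
    by auto
  ultimately show ?thesis
    by auto
qed

context
  fixes p :: "pt set set" and b X :: "pt set" and f :: "pt \<Rightarrow> pt" and k l :: nat
  assumes p: "p \<in> P k l" and b: "b \<in> p"
    and X: "X \<subseteq> pts k l - b" "\<And>x y. x \<in> X \<Longrightarrow> y \<in> X \<Longrightarrow> x = y"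
    and lower: "f ` (X \<union> b) \<subseteq> range Lo" and upper: "f ` (pts k l - (X \<union> b)) \<subseteq> range Up"
begin

lemma layout_other_block_lower_part:
  assumes "c \<in> p" "c \<noteq> b"
  shows "f ` c \<inter> range Lo = f ` (c \<inter> X)"
proof -
  have "c \<inter> b = {}"
    using P_disjoint[OF p assms(1) b] assms(2) by blast
  then show ?thesis
    using image_Int_range_Lo[OF P_block_subset[OF p assms(1)] lower upper] by (simp add: Int_Un_distrib)
qed

lemma layout_at_most_one_through_block:
  assumes "c \<in> map_blocks f p" "c' \<in> map_blocks f p"
    and "c \<inter> range Up \<noteq> {}" "c \<inter> range Lo \<noteq> {}" "c' \<inter> range Up \<noteq> {}" "c' \<inter> range Lo \<noteq> {}"
  shows "c = c'"
proof -
  have meets_X: "\<exists>x. x \<in> c0 \<inter> X"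
    if "c0 \<in> p" "f ` c0 \<inter> range Up \<noteq> {}" "f ` c0 \<inter> range Lo \<noteq> {}" for c0
  proof -
    have "c0 \<noteq> b"
      using that(2) lower by auto
    then show ?thesis
      using that(3) layout_other_block_lower_part[OF that(1)] by auto
  qed
  obtain c0 c0' x x' where "c0 \<in> p" "c = f ` c0" "x \<in> c0 \<inter> X" "c0' \<in> p" "c' = f ` c0'" "x' \<in> c0' \<inter> X"
    using assms meets_X unfolding map_blocks_def by blast
  moreover have "x = x'"
    using X(2) calculation by blast
  ultimately show "c = c'"
    using P_disjoint[OF p, of c0 c0' x] by blast
qed

lemma layout_lower_restriction:
  "(\<lambda>c. c \<inter> range Lo) ` {c \<in> map_blocks f p. c \<inter> range Lo \<noteq> {}} = insert (f ` b) ((\<lambda>x. {f x}) ` X)"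
proof (intro equalityI subsetI)
  fix B assume "B \<in> (\<lambda>c. c \<inter> range Lo) ` {c \<in> map_blocks f p. c \<inter> range Lo \<noteq> {}}"
  then obtain c where c: "c \<in> p" "f ` c \<inter> range Lo \<noteq> {}" and B: "B = f ` c \<inter> range Lo"
    by (auto simp: map_blocks_def)
  show "B \<in> insert (f ` b) ((\<lambda>x. {f x}) ` X)"
  proof (cases "c = b")
    case True
    then show ?thesis
      using B lower by auto
  next
    case False
    then have "B = f ` (c \<inter> X)"
      using B layout_other_block_lower_part[OF c(1)] by simp
    moreover obtain x where "x \<in> c \<inter> X"
      using c(2) layout_other_block_lower_part[OF c(1) False] by auto
    then have "c \<inter> X = {x}"
      using X(2) by blast
    ultimately show ?thesis
      using \<open>x \<in> c \<inter> X\<close> by auto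
  qed
next
  fix B assume B: "B \<in> insert (f ` b) ((\<lambda>x. {f x}) ` X)"
  show "B \<in> (\<lambda>c. c \<inter> range Lo) ` {c \<in> map_blocks f p. c \<inter> range Lo \<noteq> {}}"
  proof (cases "B = f ` b")
    case True
    moreover have "f ` b \<inter> range Lo = f ` b"
      using lower by auto
    moreover have "f ` b \<noteq> {}"
      using P_block_nonempty[OF p b] by simp
    ultimately show ?thesis
      using b by (intro image_eqI[of _ _ "f ` b"]) (auto simp: map_blocks_def)
  next
    case False
    then obtain x where x: "x \<in> X" "B = {f x}"
      using B by blast
    obtain c where c: "c \<in> p" "x \<in> c"
      using P_cover[OF p] X(1) x(1) by blast
    moreover have "c \<noteq> b"
      using X(1) c(2) x(1) by blast
    moreover have "c \<inter> X = {x}"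
      using X(2) x(1) c(2) by blast
    ultimately have "f ` c \<inter> range Lo = {f x}"
      using layout_other_block_lower_part by simp
    then show ?thesis
      using c x by (intro image_eqI[of _ _ "f ` c"]) (auto simp: map_blocks_def)
  qed
qed

lemma comp_capped_layout:
  assumes f: "bij_betw f (pts k l) (pts m n)" and q: "q \<in> P 0 m"
  shows "comp (map_blocks f p) q = insert (f ` b) ((\<lambda>x. {f x}) ` X)"
  using comp_lower_restriction[OF map_blocks_in_P[OF f p] q layout_at_most_one_through_block]
  by (simp add: layout_lower_restriction)

end

definition perm_part :: "nat \<Rightarrow> (nat \<Rightarrow> nat) \<Rightarrow> pt set set" where
  "perm_part l \<sigma> = (\<lambda>i. {Up i, Lo (\<sigma> i)}) ` {1..l}"

definition lower_map :: "(nat \<Rightarrow> nat) \<Rightarrow> pt \<Rightarrow> pt" where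
  "lower_map \<sigma> x = (case x of Up i \<Rightarrow> Up i | Lo j \<Rightarrow> Lo (\<sigma> j))"

lemma lower_map_simps [simp]: "lower_map \<sigma> (Up i) = Up i" "lower_map \<sigma> (Lo j) = Lo (\<sigma> j)"
  by (simp_all add: lower_map_def)

lemma lower_map_comp: "lower_map (f \<circ> g) = lower_map f \<circ> lower_map g"
  by (auto simp: fun_eq_iff lower_map_def split: pt.splits)

lemma lower_map_id: "lower_map id = id"
  by (auto simp: fun_eq_iff lower_map_def split: pt.splits)

lemma comp_edges_perm_part:
  "(y, z) \<in> comp_edges (perm_part l \<sigma>) p \<longleftrightarrow>
     (\<exists>b\<in>p. y \<in> liftq ` b \<and> z \<in> liftq ` b) \<or>
     (\<exists>i\<in>{1..l}. y \<in> {CM i, CL (\<sigma> i)} \<and> z \<in> {CM i, CL (\<sigma> i)})"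
  unfolding comp_edges_def perm_part_def by auto

definition perm_component :: "(nat \<Rightarrow> nat) \<Rightarrow> pt set \<Rightarrow> cpt set" where
  "perm_component \<sigma> c = liftq ` c \<union> CL ` \<sigma> ` {j. Lo j \<in> c}"

lemma unlift_perm_component: "unlift ` {y \<in> perm_component \<sigma> c. \<not> is_mid y} = lower_map \<sigma> ` c"
proof -
  have "{y \<in> perm_component \<sigma> c. \<not> is_mid y} = CU ` {i. Up i \<in> c} \<union> CL ` \<sigma> ` {j. Lo j \<in> c}"
    by (auto simp: perm_component_def liftq_image)
  moreover have "lower_map \<sigma> ` c = Up ` {i. Up i \<in> c} \<union> Lo ` \<sigma> ` {j. Lo j \<in> c}"
    by (subst (1) pt_set_eq) (simp add: image_Un image_image)
  ultimately show ?thesis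
    by (simp add: image_Un image_image)
qed

context
  fixes p :: "pt set set" and k l :: nat and \<sigma> :: "nat \<Rightarrow> nat"
  assumes p: "p \<in> P k l" and \<sigma>: "bij_betw \<sigma> {1..l} {1..l}"
begin

lemma lower_index_in_range: "Lo j \<in> c \<Longrightarrow> c \<in> p \<Longrightarrow> j \<in> {1..l}"
  using P_block_subset[OF p] by fastforce

lemma perm_component_closed:
  assumes c: "c \<in> p" and y: "y \<in> perm_component \<sigma> c" and e: "(y, z) \<in> comp_edges (perm_part l \<sigma>) p"
  shows "z \<in> perm_component \<sigma> c"
proof -
  from e consider (top) b where "b \<in> p" "y \<in> liftq ` b" "z \<in> liftq ` b"
    | (bot) i where "i \<in> {1..l}" "y \<in> {CM i, CL (\<sigma> i)}" "z \<in> {CM i, CL (\<sigma> i)}"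
    unfolding comp_edges_perm_part by blast
  then show ?thesis
  proof cases
    case top
    then obtain x where "x \<in> b" "y = liftq x"
      by blast
    moreover have "y \<in> liftq ` c"
      using y top by (auto simp: perm_component_def)
    ultimately have "x \<in> c"
      using inj_liftq by (auto simp: inj_eq)
    then have "b = c"
      using P_disjoint[OF p top(1) c] \<open>x \<in> b\<close> by blast
    then show ?thesis
      using top by (simp add: perm_component_def)
  next
    case bot
    have "Lo i \<in> c"
    proof (cases "y = CM i")
      case True
      then show ?thesis
        using y by (auto simp: perm_component_def)
    next
      case False
      then obtain j where "Lo j \<in> c" "\<sigma> i = \<sigma> j"
        using y bot(2) by (auto simp: perm_component_def)
      moreover have "i = j"
        using inj_onD[OF bij_betw_imp_inj_on[OF \<sigma>]] calculation bot(1) lower_index_in_range c by blast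
      ultimately show ?thesis
        by simp
    qed
    then show ?thesis
      using bot by (force simp: perm_component_def)
  qed
qed

lemma perm_component_connected:
  assumes c: "c \<in> p" and "y \<in> perm_component \<sigma> c" "z \<in> perm_component \<sigma> c"
  shows "(y, z) \<in> (comp_edges (perm_part l \<sigma>) p)\<^sup>*"
proof (rule rtrancl_through_clique[OF sym_comp_edges, where H = "liftq ` c" and S = "perm_component \<sigma> c"])
  let ?E = "comp_edges (perm_part l \<sigma>) p"
  show "(h, h') \<in> ?E" if "h \<in> liftq ` c" "h' \<in> liftq ` c" for h h'
    using that comp_edgesI(1)[OF c] by blast
  show "\<exists>h\<in>liftq ` c. (w, h) \<in> ?E\<^sup>*" if w: "w \<in> perm_component \<sigma> c" for w
  proof (cases "w \<in> liftq ` c")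
    case False
    then obtain j where "Lo j \<in> c" "w = CL (\<sigma> j)"
      using w by (auto simp: perm_component_def)
    moreover have "(w, CM j) \<in> ?E"
      using lower_index_in_range[OF calculation(1) c] calculation(2)
      unfolding comp_edges_perm_part by blast
    ultimately show ?thesis
      by force
  qed auto
qed (use assms in auto)

lemma perm_component_cover:
  assumes "x \<in> comp_vertices (perm_part l \<sigma>) p" "\<not> is_mid x"
  shows "\<exists>c\<in>p. x \<in> perm_component \<sigma> c"
proof -
  from assms consider (top) b where "b \<in> p" "x \<in> liftq ` b" | (bot) i where "i \<in> {1..l}" "x = CL (\<sigma> i)"
    unfolding comp_vertices_def perm_part_def by auto
  then show ?thesis
  proof cases
    case top
    then show ?thesis
      by (auto simp: perm_component_def)
  next
    case bot
    then obtain c where "c \<in> p" "Lo i \<in> c"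
      using P_cover[OF p, of "Lo i"] by auto
    then show ?thesis
      using bot by (auto simp: perm_component_def)
  qed
qed

lemma perm_component_nonempty:
  assumes c: "c \<in> p"
  shows "\<exists>x \<in> comp_vertices (perm_part l \<sigma>) p \<inter> perm_component \<sigma> c. \<not> is_mid x"
proof -
  obtain a where a: "a \<in> c"
    using P_block_nonempty[OF p c] by blast
  show ?thesis
  proof (cases a)
    case (Up i)
    then show ?thesis
      using a c by (intro bexI[of _ "CU i"]) (force simp: comp_vertices_def perm_component_def)+
  next
    case (Lo j)
    then show ?thesis
      using a c lower_index_in_range[of j c]
      by (intro bexI[of _ "CL (\<sigma> j)"]) (force simp: comp_vertices_def perm_part_def perm_component_def)+
  qed
qed

lemma comp_perm_part: "comp (perm_part l \<sigma>) p = map_blocks (lower_map \<sigma>) p"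
  unfolding map_blocks_def unlift_perm_component[symmetric]
  by (rule comp_eq_components[OF perm_component_closed perm_component_connected
        perm_component_cover perm_component_nonempty])

end

definition id_part :: "nat \<Rightarrow> pt set set" where
  "id_part n = (\<lambda>i. {Up i, Lo i}) ` {1..n}"

definition rotate_pt :: "nat \<Rightarrow> pt \<Rightarrow> pt" where
  "rotate_pt a x = (case x of Up i \<Rightarrow> if i \<le> a then Lo (a + 1 - i) else Up (i - a) | Lo j \<Rightarrow> Lo (a + j))"

lemma rotate_pt_simps [simp]:
  "rotate_pt a (Up i) = (if i \<le> a then Lo (a + 1 - i) else Up (i - a))" "rotate_pt a (Lo j) = Lo (a + j)"
  by (simp_all add: rotate_pt_def)

definition liftp_shift :: "pt \<Rightarrow> cpt" where
  "liftp_shift x = liftp (shift_pt 1 1 x)"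

lemma liftp_shift_simps [simp]: "liftp_shift (Up i) = CM (Suc i)" "liftp_shift (Lo j) = CL (Suc j)"
  by (simp_all add: liftp_shift_def)

lemma comp_edges_rotate:
  "(y, z) \<in> comp_edges (tensor 1 1 idp p) (tensor 0 2 pairp (id_part n)) \<longleftrightarrow>
     (y \<in> {CM 1, CM 2} \<and> z \<in> {CM 1, CM 2}) \<or>
     (\<exists>i\<in>{1..n}. y \<in> {CU i, CM (i + 2)} \<and> z \<in> {CU i, CM (i + 2)}) \<or>
     (y \<in> {CM 1, CL 1} \<and> z \<in> {CM 1, CL 1}) \<or>
     (\<exists>b\<in>p. y \<in> liftp_shift ` b \<and> z \<in> liftp_shift ` b)"
  unfolding comp_edges_def tensor_def pairp_def id_part_def idp_def liftp_shift_def
  by (auto simp: image_image)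

lemma comp_vertices_rotate:
  "comp_vertices (tensor 1 1 idp p) (tensor 0 2 pairp (id_part n)) =
     {CM 1, CM 2, CL 1} \<union> (\<Union>i\<in>{1..n}. {CU i, CM (i + 2)}) \<union> (\<Union>b\<in>p. liftp_shift ` b)"
  unfolding comp_vertices_def tensor_def pairp_def id_part_def idp_def liftp_shift_def
  by (auto simp: image_image)

text \<open>The component of the composite graph belonging to a block \<open>c\<close> of \<open>p\<close>: the shifted copy of
  \<open>c\<close>, the upper points \<open>CU i\<close> joined to it through the identity strands, and, if \<open>Up 1 \<in> c\<close>,
  the points \<open>CM 1\<close>, \<open>CL 1\<close> joined to it through the cap.\<close>
definition rotation_component :: "pt set \<Rightarrow> cpt set" where
  "rotation_component c = {x. case x of
       CU i \<Rightarrow> 1 \<le> i \<and> Up (Suc i) \<in> c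
     | CM i \<Rightarrow> (i = 1 \<and> Up 1 \<in> c) \<or> (2 \<le> i \<and> Up (i - 1) \<in> c)
     | CL j \<Rightarrow> (j = 1 \<and> Up 1 \<in> c) \<or> (2 \<le> j \<and> Lo (j - 1) \<in> c)}"

lemma in_rotation_component_iff [simp]:
  "CU i \<in> rotation_component c \<longleftrightarrow> 1 \<le> i \<and> Up (Suc i) \<in> c"
  "CM i \<in> rotation_component c \<longleftrightarrow> (i = 1 \<and> Up 1 \<in> c) \<or> (2 \<le> i \<and> Up (i - 1) \<in> c)"
  "CL j \<in> rotation_component c \<longleftrightarrow> (j = 1 \<and> Up 1 \<in> c) \<or> (2 \<le> j \<and> Lo (j - 1) \<in> c)"
  by (simp_all add: rotation_component_def)

context
  fixes p :: "pt set set" and n l :: nat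
  assumes p: "p \<in> P (Suc n) l"
begin

lemma liftp_shift_in_rotation_component:
  assumes "c \<in> p" "a \<in> pts (Suc n) l"
  shows "liftp_shift a \<in> rotation_component c \<longleftrightarrow> a \<in> c"
  using assms(2) by (cases a) (auto simp: not_less_eq_eq)

lemma rotation_component_closed:
  assumes c: "c \<in> p" and y: "y \<in> rotation_component c"
    and e: "(y, z) \<in> comp_edges (tensor 1 1 idp p) (tensor 0 2 pairp (id_part n))"
  shows "z \<in> rotation_component c"
proof -
  from e[unfolded comp_edges_rotate] consider
      "y \<in> {CM 1, CM 2}" "z \<in> {CM 1, CM 2}"
    | i where "i \<in> {1..n}" "y \<in> {CU i, CM (i + 2)}" "z \<in> {CU i, CM (i + 2)}"
    | "y \<in> {CM 1, CL 1}" "z \<in> {CM 1, CL 1}"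
    | b where "b \<in> p" "y \<in> liftp_shift ` b" "z \<in> liftp_shift ` b"
    by blast
  then show ?thesis
  proof cases
    case (4 b)
    then obtain a a' where "a \<in> b" "y = liftp_shift a" "a' \<in> b" "z = liftp_shift a'"
      by blast
    moreover have "a \<in> pts (Suc n) l" "a' \<in> pts (Suc n) l"
      using P_block_subset[OF p 4(1)] calculation by blast+
    ultimately have "b = c"
      using P_disjoint[OF p 4(1) c] y liftp_shift_in_rotation_component[OF c] by blast
    then show ?thesis
      using liftp_shift_in_rotation_component[OF c \<open>a' \<in> pts (Suc n) l\<close>] \<open>a' \<in> b\<close> \<open>z = liftp_shift a'\<close>
      by blast
  qed (use y in auto)
qed

lemma rotation_component_connected:
  assumes c: "c \<in> p" and "y \<in> rotation_component c" "z \<in> rotation_component c"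
  shows "(y, z) \<in> (comp_edges (tensor 1 1 idp p) (tensor 0 2 pairp (id_part n)))\<^sup>*"
proof (rule rtrancl_through_clique[OF sym_comp_edges, where H = "liftp_shift ` c" and S = "rotation_component c"])
  let ?E = "comp_edges (tensor 1 1 idp p) (tensor 0 2 pairp (id_part n))"
  show "(h, h') \<in> ?E" if "h \<in> liftp_shift ` c" "h' \<in> liftp_shift ` c" for h h'
    using that c unfolding comp_edges_rotate by blast
  show "\<exists>h\<in>liftp_shift ` c. (w, h) \<in> ?E\<^sup>*" if w: "w \<in> rotation_component c" for w
  proof (cases w)
    case (CU i)
    then have "Up (Suc i) \<in> c" "1 \<le> i" "i \<le> n"
      using w P_block_subset[OF p c] by auto
    moreover have "(CU i, CM (i + 2)) \<in> ?E"
      using calculation unfolding comp_edges_rotate by auto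
    ultimately show ?thesis
      using CU by (intro bexI[of _ "CM (i + 2)"]) force+
  next
    case (CM i)
    show ?thesis
    proof (cases "i = 1")
      case True
      then have "Up 1 \<in> c" "(w, liftp_shift (Up 1)) \<in> ?E"
        using w CM unfolding comp_edges_rotate by auto
      then show ?thesis
        by blast
    next
      case False
      then have "w = liftp_shift (Up (i - 1))" "Up (i - 1) \<in> c"
        using w CM by auto
      then show ?thesis
        by blast
    qed
  next
    case (CL j)
    show ?thesis
    proof (cases "j = 1")
      case True
      then have "Up 1 \<in> c" "(w, CM 1) \<in> ?E" "(CM 1, liftp_shift (Up 1)) \<in> ?E"
        using w CL unfolding comp_edges_rotate by auto
      then show ?thesis
        by (blast intro: rtrancl_into_rtrancl)
    next
      case False
      then have "w = liftp_shift (Lo (j - 1))" "Lo (j - 1) \<in> c"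
        using w CL by auto
      then show ?thesis
        by blast
    qed
  qed
qed (use assms in auto)

lemma rotation_component_cover:
  assumes "x \<in> comp_vertices (tensor 1 1 idp p) (tensor 0 2 pairp (id_part n))" "\<not> is_mid x"
  shows "\<exists>c\<in>p. x \<in> rotation_component c"
proof -
  from assms consider i where "i \<in> {1..n}" "x = CU i" | "x = CL 1" | b a where "b \<in> p" "a \<in> b" "x = liftp_shift a"
    unfolding comp_vertices_rotate by auto
  then show ?thesis
  proof cases
    case 1
    then obtain c where "c \<in> p" "Up (Suc i) \<in> c"
      using P_cover[OF p, of "Up (Suc i)"] by auto
    then show ?thesis
      using 1 by auto
  next
    case 2
    then obtain c where "c \<in> p" "Up 1 \<in> c"
      using P_cover[OF p, of "Up 1"] by auto
    then show ?thesis
      using 2 by auto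
  next
    case (3 b a)
    then show ?thesis
      using liftp_shift_in_rotation_component[OF 3(1)] P_block_subset[OF p 3(1)] by blast
  qed
qed

lemma rotation_component_nonempty:
  assumes c: "c \<in> p"
  shows "\<exists>x \<in> comp_vertices (tensor 1 1 idp p) (tensor 0 2 pairp (id_part n)) \<inter> rotation_component c.
    \<not> is_mid x"
proof -
  obtain a where a: "a \<in> c"
    using P_block_nonempty[OF p c] by blast
  then have "a \<in> pts (Suc n) l"
    using P_block_subset[OF p c] by blast
  show ?thesis
  proof (cases a)
    case (Up i)
    show ?thesis
    proof (cases "i = 1")
      case True
      then show ?thesis
        using a Up by (intro bexI[of _ "CL 1"]) (unfold comp_vertices_rotate, auto)
    next
      case False
      then show ?thesis
        using a Up \<open>a \<in> pts (Suc n) l\<close>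
        by (intro bexI[of _ "CU (i - 1)"]) (unfold comp_vertices_rotate, auto)
    qed
  next
    case (Lo j)
    then have "CL (Suc j) \<in> liftp_shift ` c" "CL (Suc j) \<in> rotation_component c"
      using a \<open>a \<in> pts (Suc n) l\<close> by (auto intro: rev_image_eqI)
    then show ?thesis
      using c by (intro bexI[of _ "CL (Suc j)"]) (unfold comp_vertices_rotate, auto)
  qed
qed

lemma unlift_rotation_component:
  assumes c: "c \<in> p"
  shows "unlift ` {y \<in> rotation_component c. \<not> is_mid y} = rotate_pt 1 ` c"
proof (intro equalityI subsetI)
  fix x assume "x \<in> unlift ` {y \<in> rotation_component c. \<not> is_mid y}"
  then obtain y where y: "y \<in> rotation_component c" "\<not> is_mid y" "x = unlift y"
    by blast
  then show "x \<in> rotate_pt 1 ` c"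
  proof (cases y)
    case (CU i)
    then show ?thesis
      using y by (intro image_eqI[of _ _ "Up (Suc i)"]) auto
  next
    case (CL j)
    then show ?thesis
      using y by (cases "j = 1") (auto intro: image_eqI[of _ _ "Up 1"] image_eqI[of _ _ "Lo (j - 1)"])
  qed simp
next
  fix x assume "x \<in> rotate_pt 1 ` c"
  then obtain a where a: "a \<in> c" "x = rotate_pt 1 a"
    by blast
  then have "a \<in> pts (Suc n) l"
    using P_block_subset[OF p c] by blast
  then have "(case a of Up (Suc 0) \<Rightarrow> CL 1 | Up (Suc i) \<Rightarrow> CU i | Lo j \<Rightarrow> CL (Suc j))
      \<in> {y \<in> rotation_component c. \<not> is_mid y}"
    using a by (auto split: pt.split nat.split)
  moreover have "x = unlift (case a of Up (Suc 0) \<Rightarrow> CL 1 | Up (Suc i) \<Rightarrow> CU i | Lo j \<Rightarrow> CL (Suc j))"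
    using a \<open>a \<in> pts (Suc n) l\<close> by (auto split: pt.split nat.split)
  ultimately show "x \<in> unlift ` {y \<in> rotation_component c. \<not> is_mid y}"
    by blast
qed

lemma comp_rotate_one: "comp (tensor 1 1 idp p) (tensor 0 2 pairp (id_part n)) = map_blocks (rotate_pt 1) p"
proof -
  have "comp (tensor 1 1 idp p) (tensor 0 2 pairp (id_part n)) =
      (\<lambda>c. unlift ` {y \<in> rotation_component c. \<not> is_mid y}) ` p"
    by (rule comp_eq_components[OF rotation_component_closed rotation_component_connected
          rotation_component_cover rotation_component_nonempty])
  also have "\<dots> = map_blocks (rotate_pt 1) p"
    unfolding map_blocks_def using unlift_rotation_component by (rule image_cong[OF refl])
  finally show ?thesis .
qed

end

section \<open>Closure properties of categories of partitions\<close>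

lemma
  assumes "is_category Px"
  shows category_subset_P: "Px k l \<subseteq> P k l"
    and category_tensor: "p \<in> Px k l \<Longrightarrow> q \<in> Px k' l' \<Longrightarrow> tensor k l p q \<in> Px (k + k') (l + l')"
    and category_comp: "p \<in> Px m l \<Longrightarrow> q \<in> Px k m \<Longrightarrow> comp p q \<in> Px k l"
    and category_invol: "p \<in> Px k l \<Longrightarrow> invol p \<in> Px l k"
    and category_idp: "idp \<in> Px 1 1"
    and category_crossp: "crossp \<in> Px 2 2"
    and category_pairp: "pairp \<in> Px 0 2"
  using assms by (simp_all add: is_category_def)

lemma category_P: "is_category Px \<Longrightarrow> p \<in> Px k l \<Longrightarrow> p \<in> P k l"
  using category_subset_P by blast

lemma category_empty:
  assumes cat: "is_category Px"
  shows "{} \<in> Px 0 0"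
proof -
  have cap: "invol pairp \<in> Px 2 0"
    using category_invol[OF cat category_pairp[OF cat]] .
  have "comp (invol pairp) pairp = {}"
    using comp_lower_restriction[OF category_P[OF cat cap] category_P[OF cat category_pairp[OF cat]]]
    by (auto simp: invol_def pairp_def)
  then show ?thesis
    using category_comp[OF cat cap category_pairp[OF cat]] by simp
qed

lemma category_id_part:
  assumes cat: "is_category Px"
  shows "id_part n \<in> Px n n"
proof (induction n)
  case 0
  then show ?case
    using category_empty[OF cat] by (simp add: id_part_def)
next
  case (Suc n)
  have "tensor n n (id_part n) idp = id_part (Suc n)"
    by (auto simp: tensor_def id_part_def idp_def)
  then show ?case
    using category_tensor[OF cat Suc category_idp[OF cat]] by simp
qed

lemma category_pairings:
  assumes cat: "is_category Px"
  shows "\<exists>q. q \<in> Px 0 (2 * t)"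
proof (induction t)
  case 0
  then show ?case
    using category_empty[OF cat] by auto
next
  case (Suc t)
  then obtain q where "q \<in> Px 0 (2 * t)"
    by blast
  then show ?case
    using category_tensor[OF cat _ category_pairp[OF cat]] by fastforce
qed

lemma category_rotate_one:
  assumes cat: "is_category Px" and p: "p \<in> Px (Suc c) l"
  shows "map_blocks (rotate_pt 1) p \<in> Px c (Suc l)"
proof -
  have "tensor 1 1 idp p \<in> Px (Suc (Suc c)) (Suc l)"
    using category_tensor[OF cat category_idp[OF cat] p] by simp
  moreover have "tensor 0 2 pairp (id_part c) \<in> Px c (Suc (Suc c))"
    using category_tensor[OF cat category_pairp[OF cat] category_id_part[OF cat]] by simp
  ultimately show ?thesis
    using category_comp[OF cat] comp_rotate_one[OF category_P[OF cat p]] by metis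
qed

lemma rotate_pt_0: "x \<in> pts c l \<Longrightarrow> rotate_pt 0 x = x"
  by (cases x) auto

lemma rotate_pt_Suc: "x \<in> pts (Suc (a + c)) l \<Longrightarrow> rotate_pt a (rotate_pt 1 x) = rotate_pt (Suc a) x"
  by (cases x) auto

lemma category_rotate:
  assumes cat: "is_category Px"
  shows "p \<in> Px (a + c) l \<Longrightarrow> map_blocks (rotate_pt a) p \<in> Px c (a + l)"
proof (induction a arbitrary: l p)
  case 0
  then show ?case
    using map_blocks_ident[of p] rotate_pt_0 P_Union[OF category_P[OF cat]] by simp
next
  case (Suc a)
  then have p: "p \<in> Px (Suc (a + c)) l"
    by simp
  have "map_blocks (rotate_pt a) (map_blocks (rotate_pt 1) p) \<in> Px c (a + Suc l)"
    using Suc.IH[OF category_rotate_one[OF cat p]] .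
  moreover have "map_blocks (rotate_pt a) (map_blocks (rotate_pt 1) p) = map_blocks (rotate_pt (Suc a)) p"
    unfolding map_blocks_comp
    by (rule map_blocks_cong) (use rotate_pt_Suc P_Union[OF category_P[OF cat p]] in auto)
  ultimately show ?case
    by simp
qed

lemma perm_part_adjacent_transposition:
  assumes "1 \<le> j" "Suc j \<le> l"
  shows "perm_part l (transpose j (Suc j)) =
    tensor (Suc j) (Suc j) (tensor (j - 1) (j - 1) (id_part (j - 1)) crossp) (id_part (l - Suc j))"
proof -
  have split: "{1..l} = {1..j - 1} \<union> {j, Suc j} \<union> (\<lambda>i. i + Suc j) ` {1..l - Suc j}"
  proof (intro equalityI subsetI)
    fix x assume "x \<in> {1..l}"
    then show "x \<in> {1..j - 1} \<union> {j, Suc j} \<union> (\<lambda>i. i + Suc j) ` {1..l - Suc j}"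
      by (cases "Suc j < x") (auto simp: image_iff intro!: bexI[of _ "x - Suc j"])
  qed (use assms in auto)
  have "(\<lambda>i. {Up i, Lo (transpose j (Suc j) i)}) ` {1..j - 1} = (\<lambda>i. {Up i, Lo i}) ` {1..j - 1}"
    by (rule image_cong) auto
  moreover have "(\<lambda>i. {Up i, Lo (transpose j (Suc j) i)}) ` (\<lambda>i. i + Suc j) ` {1..l - Suc j}
      = (\<lambda>i. {Up (i + Suc j), Lo (i + Suc j)}) ` {1..l - Suc j}"
    by (auto simp: image_image)
  moreover have "j - 1 + 1 = j" "j - 1 + 2 = Suc j"
    using assms by auto
  ultimately show ?thesis
    unfolding perm_part_def split image_Un
    by (auto simp: tensor_def id_part_def crossp_def image_image)
qed

lemma category_lower_map_adjacent:
  assumes cat: "is_category Px" and q: "q \<in> Px k l" and j: "1 \<le> j" "Suc j \<le> l"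
  shows "map_blocks (lower_map (transpose j (Suc j))) q \<in> Px k l"
proof -
  have "tensor (j - 1) (j - 1) (id_part (j - 1)) crossp \<in> Px (j - 1 + 2) (j - 1 + 2)"
    using category_tensor[OF cat category_id_part[OF cat] category_crossp[OF cat]] .
  then have "tensor (j - 1) (j - 1) (id_part (j - 1)) crossp \<in> Px (Suc j) (Suc j)"
    using j by simp
  then have "perm_part l (transpose j (Suc j)) \<in> Px l l"
    using category_tensor[OF cat _ category_id_part[OF cat], of _ "Suc j" "Suc j" "l - Suc j"]
      perm_part_adjacent_transposition[OF j] j by simp
  moreover have "bij_betw (transpose j (Suc j)) {1..l} {1..l}"
    using j by (intro permutes_imp_bij permutes_swap_id) auto
  ultimately show ?thesis
    using category_comp[OF cat _ q] comp_perm_part[OF category_P[OF cat q]] by metis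
qed

lemma transpose_eq_conjugate_Suc:
  assumes "Suc a < b"
  shows "transpose a b = transpose a (Suc a) \<circ> transpose (Suc a) b \<circ> transpose a (Suc a)"
  using assms by (auto simp: fun_eq_iff transpose_def)

lemma category_lower_map_transpose_less:
  assumes cat: "is_category Px"
  shows "1 \<le> a \<Longrightarrow> a + Suc d \<le> l \<Longrightarrow> q \<in> Px k l
    \<Longrightarrow> map_blocks (lower_map (transpose a (a + Suc d))) q \<in> Px k l"
proof (induction d arbitrary: a q)
  case 0
  then show ?case
    using category_lower_map_adjacent[OF cat] by simp
next
  case (Suc d)
  let ?t = "lower_map (transpose a (Suc a))" and ?t' = "lower_map (transpose (Suc a) (Suc a + Suc d))"
  have "map_blocks ?t q \<in> Px k l"
    using category_lower_map_adjacent[OF cat Suc.prems(3)] Suc.prems by simp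
  then have "map_blocks ?t' (map_blocks ?t q) \<in> Px k l"
    using Suc.IH[of "Suc a"] Suc.prems by simp
  then have "map_blocks ?t (map_blocks ?t' (map_blocks ?t q)) \<in> Px k l"
    using category_lower_map_adjacent[OF cat] Suc.prems by simp
  moreover have "transpose a (a + Suc (Suc d)) =
      transpose a (Suc a) \<circ> transpose (Suc a) (Suc a + Suc d) \<circ> transpose a (Suc a)"
    using transpose_eq_conjugate_Suc[of a "a + Suc (Suc d)"] by simp
  ultimately show ?case
    by (simp only: lower_map_comp flip: map_blocks_comp)
qed

lemma category_lower_map_transpose:
  assumes cat: "is_category Px" and q: "q \<in> Px k l" and ab: "a \<in> {1..l}" "b \<in> {1..l}"
  shows "map_blocks (lower_map (transpose a b)) q \<in> Px k l"
proof -
  have less: "map_blocks (lower_map (transpose a b)) q \<in> Px k l"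
    if "a < b" "a \<in> {1..l}" "b \<in> {1..l}" for a b
    using that less_imp_Suc_add[OF \<open>a < b\<close>] category_lower_map_transpose_less[OF cat _ _ q] by auto
  consider "a < b" | "a = b" | "b < a"
    by linarith
  then show ?thesis
    by cases (use less[of a b] less[of b a] ab q in \<open>auto simp: lower_map_id map_blocks_def transpose_commute\<close>)
qed

lemma category_lower_map:
  assumes cat: "is_category Px" and \<sigma>: "\<sigma> permutes {1..l}" and q: "q \<in> Px k l"
  shows "map_blocks (lower_map \<sigma>) q \<in> Px k l"
  using \<sigma> finite_atLeastAtMost q
proof (induction arbitrary: q rule: permutes_induct)
  case id
  then show ?case
    using lower_map_id by (simp add: id_def map_blocks_def)
next
  case (swap a b \<sigma>)
  then have "map_blocks (lower_map (transpose a b)) (map_blocks (lower_map \<sigma>) q) \<in> Px k l"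
    using category_lower_map_transpose[OF cat] by blast
  then show ?case
    by (simp only: lower_map_comp flip: map_blocks_comp)
qed

lemma ball_pts: "(\<forall>x\<in>pts k l. Q x) \<longleftrightarrow> (\<forall>i\<in>{1..k}. Q (Up i)) \<and> (\<forall>j\<in>{1..l}. Q (Lo j))"
  by (auto simp: pts_def)

lemma bij_betw_rotate_pt: "bij_betw (rotate_pt a) (pts (a + c) l) (pts c (a + l))"
proof (rule bij_betw_byWitness)
  let ?g = "\<lambda>y. case y of Up i \<Rightarrow> Up (i + a) | Lo j \<Rightarrow> if j \<le> a then Up (a + 1 - j) else Lo (j - a)"
  show "\<forall>x\<in>pts (a + c) l. ?g (rotate_pt a x) = x"
    by (auto simp: ball_pts)
  show "\<forall>y\<in>pts c (a + l). rotate_pt a (?g y) = y"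
    by (auto simp: ball_pts)
  show "rotate_pt a ` pts (a + c) l \<subseteq> pts c (a + l)"
    by (auto simp: image_subset_iff ball_pts)
  show "?g ` pts c (a + l) \<subseteq> pts (a + c) l"
    by (auto simp: image_subset_iff ball_pts)
qed

lemma bij_betw_swap_pt: "bij_betw swap_pt (pts k l) (pts l k)"
  by (rule bij_betw_byWitness[where f' = swap_pt]) (auto simp: swap_pt_def split: pt.split)

lemma bij_lower_points_eq_lower_map:
  assumes \<tau>: "bij_betw \<tau> (pts 0 n) (pts 0 n)"
  obtains \<sigma> where "\<sigma> permutes {1..n}" "\<And>x. x \<in> pts 0 n \<Longrightarrow> \<tau> x = lower_map \<sigma> x"
proof -
  define index where "index y = (case y of Up i \<Rightarrow> i | Lo j \<Rightarrow> j)" for y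
  define \<sigma> where "\<sigma> j = (if j \<in> {1..n} then index (\<tau> (Lo j)) else j)" for j
  have "bij_betw Lo {1..n} (pts 0 n)"
    by (simp add: pts_0_left bij_betw_def inj_on_def)
  moreover have "bij_betw index (pts 0 n) {1..n}"
    by (rule bij_betw_byWitness[where f' = Lo]) (auto simp: pts_0_left index_def)
  ultimately have "bij_betw (index \<circ> (\<tau> \<circ> Lo)) {1..n} {1..n}"
    using \<tau> by (blast intro: bij_betw_trans)
  then have "bij_betw \<sigma> {1..n} {1..n}"
    by (rule bij_betw_cong[THEN iffD1, rotated]) (simp add: \<sigma>_def)
  then have "\<sigma> permutes {1..n}"
    by (rule bij_imp_permutes) (auto simp: \<sigma>_def)
  moreover have "\<tau> x = lower_map \<sigma> x" if x: "x \<in> pts 0 n" for x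
  proof -
    obtain j where "j \<in> {1..n}" "x = Lo j"
      using x by (auto simp: pts_0_left)
    moreover have "\<tau> (Lo j) \<in> range Lo"
      using bij_betwE[OF \<tau>] calculation by (force simp: pts_0_left)
    ultimately show ?thesis
      by (auto simp: \<sigma>_def index_def)
  qed
  ultimately show ?thesis
    using that by blast
qed

lemma category_relabel:
  assumes cat: "is_category Px" and p: "p \<in> Px k l"
    and f: "bij_betw f (pts k l) (pts k' l')" and size: "k + l = k' + l'"
  shows "map_blocks f p \<in> Px k' l'"
proof -
  \<comment> \<open>\<open>f\<close> factors as: rotate all points to the lower row, permute them there, turn the result
    upside down and rotate \<open>l'\<close> points back to the lower row.\<close>
  define n where "n = k + l"
  define H where "H = rotate_pt l' \<circ> swap_pt"
  have G: "bij_betw (rotate_pt k) (pts k l) (pts 0 n)"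
    using bij_betw_rotate_pt[of k 0 l] by (simp add: n_def)
  have "bij_betw H (pts 0 n) (pts k' l')"
    unfolding H_def using bij_betw_swap_pt bij_betw_rotate_pt[of l' k' 0] size
    by (auto simp: n_def add.commute intro: bij_betw_trans)
  then have H: "H (inv_into (pts 0 n) H y) = y" if "y \<in> pts k' l'" for y
    using that by (meson bij_betw_inv_into_right)
  define \<tau> where "\<tau> = inv_into (pts 0 n) H \<circ> f \<circ> inv_into (pts k l) (rotate_pt k)"
  have "bij_betw \<tau> (pts 0 n) (pts 0 n)"
    unfolding \<tau>_def using bij_betw_inv_into[OF G] f bij_betw_inv_into[OF \<open>bij_betw H _ _\<close>]
    by (auto intro: bij_betw_trans)
  then obtain \<sigma> where \<sigma>: "\<sigma> permutes {1..n}" and \<sigma>_eq: "\<And>x. x \<in> pts 0 n \<Longrightarrow> \<tau> x = lower_map \<sigma> x"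
    by (rule bij_lower_points_eq_lower_map) blast
  have "f x = (H \<circ> lower_map \<sigma> \<circ> rotate_pt k) x" if "x \<in> pts k l" for x
    using \<sigma>_eq[OF bij_betwE[OF G, rule_format, OF that], unfolded \<tau>_def] H[OF bij_betwE[OF f, rule_format, OF that]]
      bij_betw_inv_into_left[OF G that] by simp
  then have eq: "map_blocks f p =
      map_blocks (rotate_pt l') (invol (map_blocks (lower_map \<sigma>) (map_blocks (rotate_pt k) p)))"
    unfolding invol_eq_map_blocks map_blocks_comp H_def
    by (intro map_blocks_cong) (use P_Union[OF category_P[OF cat p]] in \<open>auto simp: comp_assoc\<close>)
  have "map_blocks (rotate_pt k) p \<in> Px 0 n"
    using category_rotate[OF cat, of p k 0 l] p by (simp add: n_def)
  then have "invol (map_blocks (lower_map \<sigma>) (map_blocks (rotate_pt k) p)) \<in> Px (l' + k') 0"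
    using category_invol[OF cat category_lower_map[OF cat \<sigma>]] by (simp add: n_def size add.commute)
  then show ?thesis
    unfolding eq using category_rotate[OF cat] by fastforce
qed

section \<open>Bar partitions, blocks and one-block partitions\<close>

lemma category_bar_part:
  assumes cat: "is_category Px" and p: "p \<in> Px k l"
  shows "bar_part k p \<in> Px 0 (k + l)"
proof -
  have "bar_part k p = map_blocks (rotate_pt k) p"
    unfolding bar_part_def map_blocks_def[symmetric]
  proof (rule map_blocks_cong)
    fix x assume "x \<in> \<Union>p"
    then show "rot_pt k x = rotate_pt k x"
      using P_Union[OF category_P[OF cat p]] by (cases x) auto
  qed
  then show ?thesis
    using category_rotate[OF cat, of p k 0 l] p by simp
qed

lemma category_layout_one_blocks:
  assumes cat: "is_category Px" and "finite B" "disjoint B" "\<And>b. b \<in> B \<Longrightarrow> finite b"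
    and one_blocks: "\<And>b. b \<in> B \<Longrightarrow> one_block (card b) \<in> Px 0 (card b)"
  shows "\<exists>n g. map_blocks g B \<in> Px 0 n \<and> bij_betw g (\<Union>B) (pts 0 n)"
  using assms(2-)
proof (induction B rule: finite_induct)
  case empty
  then show ?case
    using category_empty[OF cat] by (intro exI[of _ 0]) (auto simp: map_blocks_def pts_0_left)
next
  case (insert b B)
  obtain n g where g: "map_blocks g B \<in> Px 0 n" "bij_betw g (\<Union>B) (pts 0 n)"
    using insert by (auto simp: pairwise_insert)
  define s where "s = card b"
  define shifted where "shifted = (\<lambda>j. Lo (j + n)) ` {1..s}"
  have "\<Union>B \<inter> b = {}"
    using insert.prems(1) insert.hyps(2) by (auto simp: pairwise_insert disjnt_def)
  moreover have "card b = card shifted"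
    by (simp add: shifted_def s_def card_image inj_on_def)
  moreover have "pts 0 n \<inter> shifted = {}"
    by (auto simp: shifted_def pts_0_left)
  moreover have "finite b" "finite shifted"
    using insert.prems(2) by (auto simp: shifted_def)
  ultimately obtain g' where g': "bij_betw g' (\<Union>B \<union> b) (pts 0 n \<union> shifted)"
    "\<And>x. x \<in> \<Union>B \<Longrightarrow> g' x = g x" "g' ` b = shifted"
    using bij_betw_extend[OF g(2)] by metis
  have "map_blocks g' (insert b B) = tensor 0 n (map_blocks g B) (one_block s)"
    using map_blocks_cong[of B g' g] g'(2,3)
    by (auto simp: map_blocks_def tensor_def one_block_def shifted_def image_image)
  moreover have "tensor 0 n (map_blocks g B) (one_block s) \<in> Px 0 (n + s)"
    using category_tensor[OF cat g(1) insert.prems(3)] by (simp add: s_def)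
  moreover have "pts 0 n \<union> shifted = pts 0 (n + s)"
  proof -
    have "(\<lambda>j. Lo (j + n)) ` {1..s} = Lo ` {1 + n..s + n}"
      by (simp only: image_image[of Lo "\<lambda>j. j + n", symmetric] image_add_atLeastAtMost')
    then show ?thesis
      by (auto simp: pts_0_left shifted_def)
  qed
  ultimately show ?case
    using g'(1) by (intro exI[of _ "n + s"] exI[of _ g']) (simp add: Un_commute)
qed

lemma category_of_one_blocks:
  assumes cat: "is_category Px" and p: "p \<in> P k l"
    and one_blocks: "\<And>b. b \<in> p \<Longrightarrow> one_block (card b) \<in> Px 0 (card b)"
  shows "p \<in> Px k l"
proof -
  have "disjoint p"
    using p by (simp add: P_def partition_on_def)
  then obtain n g where g: "map_blocks g p \<in> Px 0 n" "bij_betw g (pts k l) (pts 0 n)"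
    using category_layout_one_blocks[OF cat finite_P[OF p] _ finite_P_block[OF p] one_blocks]
      P_Union[OF p] by metis
  have "k + l = 0 + n"
    using bij_betw_same_card[OF g(2)] by (simp add: card_pts)
  then have "map_blocks (inv_into (pts k l) g) (map_blocks g p) \<in> Px k l"
    using category_relabel[OF cat g(1) bij_betw_inv_into[OF g(2)]] by simp
  moreover have "map_blocks (inv_into (pts k l) g) (map_blocks g p) = p"
    unfolding map_blocks_comp
    by (rule map_blocks_ident) (use P_Union[OF p] bij_betw_inv_into_left[OF g(2)] in auto)
  ultimately show ?thesis
    by simp
qed

lemma obtain_row_layout:
  assumes "finite X" "finite b" "finite R" "X \<inter> b = {}" "(X \<union> b) \<inter> R = {}"
  obtains f where "bij_betw f (X \<union> b \<union> R) (pts (card R) (card X + card b))"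
    "f ` X = Lo ` {1..card X}" "f ` b = (\<lambda>j. Lo (j + card X)) ` {1..card b}" "f ` R = Up ` {1..card R}"
proof -
  define e where "e = card X"
  define lowb where "lowb = (\<lambda>j. Lo (j + e)) ` {1..card b}"
  have "\<exists>f0. bij_betw f0 X (Lo ` {1..e})"
    by (rule finite_same_card_bij[OF assms(1)]) (simp_all add: e_def card_image inj_on_def)
  then obtain f0 where f0: "bij_betw f0 X (Lo ` {1..e})" ..
  moreover have "finite lowb" "card b = card lowb" "Lo ` {1..e} \<inter> lowb = {}"
    by (simp_all add: lowb_def card_image inj_on_def) auto
  ultimately obtain f1 where f1: "bij_betw f1 (X \<union> b) (Lo ` {1..e} \<union> lowb)"
    "\<And>x. x \<in> X \<Longrightarrow> f1 x = f0 x" "f1 ` b = lowb"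
    using bij_betw_extend[OF f0 assms(2)] assms(4) by metis
  moreover have "finite (Up ` {1..card R})" "card R = card (Up ` {1..card R})"
    "(Lo ` {1..e} \<union> lowb) \<inter> Up ` {1..card R} = {}"
    by (simp_all add: card_image inj_on_def lowb_def) auto
  ultimately obtain f where f: "bij_betw f (X \<union> b \<union> R) (Lo ` {1..e} \<union> lowb \<union> Up ` {1..card R})"
    "\<And>x. x \<in> X \<union> b \<Longrightarrow> f x = f1 x" "f ` R = Up ` {1..card R}"
    using bij_betw_extend[OF f1(1) assms(3)] assms(5) by metis
  have "f ` X = Lo ` {1..e}"
    using f(2) f1(2) bij_betw_imp_surj_on[OF f0] by (simp cong: image_cong)
  moreover have "f ` b = lowb"
    using f(2) f1(3) by (simp cong: image_cong)
  moreover have "Lo ` {1..e} \<union> lowb \<union> Up ` {1..card R} = pts (card R) (e + card b)"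
  proof -
    have "lowb = Lo ` {1 + e..card b + e}"
      by (simp only: lowb_def image_image[of Lo "\<lambda>j. j + e", symmetric] image_add_atLeastAtMost')
    then show ?thesis
      by (auto simp: pts_def)
  qed
  ultimately show ?thesis
    using that f by (simp add: e_def lowb_def)
qed

lemma category_extract_block:
  assumes cat: "is_category Px" and p: "p \<in> Px k l" and b: "b \<in> p"
    and X: "X \<subseteq> pts k l - b" "card X \<le> 1" and rest: "card (pts k l - b - X) = 2 * t"
  shows "tensor 0 (card X) ((\<lambda>j. {Lo j}) ` {1..card X}) (one_block (card b)) \<in> Px 0 (card X + card b)"
proof -
  let ?R = "pts k l - b - X"
  have pP: "p \<in> P k l"
    using category_P[OF cat p] .
  have b_pts: "b \<subseteq> pts k l"
    using P_block_subset[OF pP b] .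
  have fin: "finite X" "finite b" "finite ?R"
    using finite_subset[OF X(1)] finite_subset[OF b_pts] by auto
  obtain f where f: "bij_betw f (X \<union> b \<union> ?R) (pts (card ?R) (card X + card b))"
    and fX: "f ` X = Lo ` {1..card X}" and fb: "f ` b = (\<lambda>j. Lo (j + card X)) ` {1..card b}"
    and fR: "f ` ?R = Up ` {1..card ?R}"
    by (rule obtain_row_layout[OF fin]) (use X(1) in auto)
  have pts_split: "X \<union> b \<union> ?R = pts k l"
    using X(1) b_pts by auto
  have "k + l = card ?R + (card X + card b)"
    using bij_betw_same_card[OF f] by (simp add: pts_split card_pts)
  then have r: "map_blocks f p \<in> Px (2 * t) (card X + card b)"
    using category_relabel[OF cat p] f by (simp add: pts_split rest)
  obtain q where q: "q \<in> Px 0 (2 * t)"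
    using category_pairings[OF cat] by blast
  have "comp (map_blocks f p) q = insert (f ` b) ((\<lambda>x. {f x}) ` X)"
  proof (rule comp_capped_layout[OF pP b X(1) _ _ _ _ category_P[OF cat q]])
    show "bij_betw f (pts k l) (pts (2 * t) (card X + card b))"
      using f by (simp add: pts_split rest)
    show "x = y" if "x \<in> X" "y \<in> X" for x y
      using X(2) fin(1) that by (auto simp: card_le_Suc0_iff_eq)
    show "f ` (X \<union> b) \<subseteq> range Lo"
      using fX fb by (auto simp: image_Un)
    show "f ` (pts k l - (X \<union> b)) \<subseteq> range Up"
    proof -
      have "pts k l - (X \<union> b) = ?R"
        by blast
      then show ?thesis
        using fR by auto
    qed
  qed
  also have "\<dots> = tensor 0 (card X) ((\<lambda>j. {Lo j}) ` {1..card X}) (one_block (card b))"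
  proof -
    have "(\<lambda>x. {f x}) ` X = (\<lambda>j. {Lo j}) ` {1..card X}"
      using arg_cong[OF fX, of "(`) (\<lambda>y. {y})"] by (simp add: image_image)
    then show ?thesis
      by (simp add: tensor_def one_block_def fb image_image)
  qed
  finally show ?thesis
    using category_comp[OF cat r q] by simp
qed

lemma category_block_one_block:
  assumes cat: "is_category Px" and p: "p \<in> Px k l" and b: "b \<in> p"
  shows "one_block (card b) \<in> Px 0 (card b) \<or> tensor 0 1 singp (one_block (card b)) \<in> Px 0 (card b + 1)"
proof (cases "even (card (pts k l - b))")
  case True
  then obtain t where "card (pts k l - b - {}) = 2 * t"
    by auto
  then show ?thesis
    using category_extract_block[OF cat p b, of "{}"] by (simp add: tensor_0_0_empty)
next
  case False
  then have "pts k l - b \<noteq> {}"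
    by (metis card.empty dvd_0_right)
  then obtain x where x: "x \<in> pts k l - b"
    by blast
  then have "card (pts k l - b - {x}) = card (pts k l - b) - 1"
    by simp
  then obtain t where "card (pts k l - b - {x}) = 2 * t"
    using False by (metis odd_two_times_div_two_nat)
  then show ?thesis
    using category_extract_block[OF cat p b, of "{x}"] x by (simp add: singp_def add.commute)
qed

theorem lemma2p7:
  assumes "is_category Px"
  shows "(\<forall>k l p. p \<in> Px k l \<longrightarrow> bar_part k p \<in> Px 0 (k + l))
       \<and> (\<forall>k l p b. p \<in> Px k l \<longrightarrow> b \<in> p \<longrightarrow>
            one_block (card b) \<in> Px 0 (card b) \<or>
            tensor 0 1 singp (one_block (card b)) \<in> Px 0 (card b + 1))
       \<and> (\<forall>k l p. p \<in> P k l \<longrightarrow> (\<forall>b\<in>p. one_block (card b) \<in> Px 0 (card b))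
            \<longrightarrow> p \<in> Px k l)"
  using category_bar_part[OF assms] category_block_one_block[OF assms] category_of_one_blocks[OF assms]
  by blast

end
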